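(* Let $n\ge 1$ be an integer and $p\in\mathbb{R}$ with $p\neq 1$. Let $w$ be the fundamental solution of the $p$-Laplace equation in $\mathbb{R}^n$, i.e. \[w(x)=-c_{n,p}\tfrac{p-1}{p-n}|x|^{\frac{p-n}{p-1}}\ \text{ if } p\neq n,\qquad w(x)=-c_{n,n}\ln|x|\ \text{ if } p=n,\] where $c_{n,p}>0$ is a constant. Let $N\ge1$, $a_1,\dots,a_N>0$, $y_1,\dots,y_N\in\mathbb{R}^n$, and $V(x):=\sum_{i=1}^N a_i w(x-y_i)$. Then, at all points $x\in\mathbb{R}^n\setminus\{y_1,\dots,y_N\}$ where $\nabla V(x)\neq 0$ (so that $\Delta_pV(x)$ is defined), $\Delta_p V(x)$ has one and the same sign, namely: if $n=1$ or $p=2$ or $p+n=2$, then $\Delta_pV=0$; otherwise, $\Delta_pV\le 0$ at all such points when $\frac{(p-2)(p+n-2)}{p-1}>0$, and $\Delta_pV\ge 0$ at all such points when $\frac{(p-2)(p+n-2)}{p-1}<0$.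
   Context: For a function $u$ that is $C^2$ near $x$ with $\nabla u(x)\neq0$, the $p$-Laplacian is $\Delta_p u=\operatorname{div}(|\nabla u|^{p-2}\nabla u)=|\nabla u|^{p-2}\Big((p-2)\frac{\nabla u\,(\mathcal{H}u)\,\nabla u^T}{|\nabla u|^2}+\Delta u\Big)$, where $\mathcal{H}u$ is the Hessian matrix of $u$ and $\nabla u$ is a row vector. *)

theory Defs
  imports "HOL-Analysis.Analysis"
begin

definition partial :: "(real^'n \<Rightarrow> real) \<Rightarrow> 'n \<Rightarrow> real^'n \<Rightarrow> real" where
  "partial u i x = deriv (\<lambda>t. u (x + t *\<^sub>R axis i 1)) 0"

definition grad :: "(real^'n \<Rightarrow> real) \<Rightarrow> real^'n \<Rightarrow> real^'n" where
  "grad u x = (\<chi> i. partial u i x)"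

definition hess :: "(real^'n \<Rightarrow> real) \<Rightarrow> real^'n \<Rightarrow> real^'n^'n" where
  "hess u x = (\<chi> i j. partial (\<lambda>z. partial u j z) i x)"

definition laplacian :: "(real^'n \<Rightarrow> real) \<Rightarrow> real^'n \<Rightarrow> real" where
  "laplacian u x = (\<Sum>i\<in>UNIV. hess u x $ i $ i)"

text \<open>p-Laplacian, for u C^2 near x with nonzero gradient (formula from the paper).\<close>
definition p_laplacian :: "real \<Rightarrow> (real^'n \<Rightarrow> real) \<Rightarrow> real^'n \<Rightarrow> real" where
  "p_laplacian p u x =
     norm (grad u x) powr (p - 2) *
     ((p - 2) * (grad u x \<bullet> (hess u x *v grad u x)) / (norm (grad u x))\<^sup>2
      + laplacian u x)"

definition fund_sol :: "real \<Rightarrow> real \<Rightarrow> real^'n \<Rightarrow> real" where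
  "fund_sol c p x =
     (if p \<noteq> real CARD('n)
      then - c * (p - 1) / (p - real CARD('n)) * norm x powr ((p - real CARD('n)) / (p - 1))
      else - c * ln (norm x))"

end

theory Submission
  imports Defs
begin

text \<open>
  Away from the poles, the gradient of \<open>w(x - y\<^sub>k)\<close> is \<open>-c |d\<^sub>k|^g d\<^sub>k\<close>, where
  \<open>d\<^sub>k = x - y\<^sub>k\<close> and \<open>g = (2 - n - p)/(p - 1)\<close>. Hence the Hessian of \<open>V\<close> is a sum of
  matrices \<open>q\<^sub>k (g d\<^sub>k d\<^sub>k\<^sup>T + |d\<^sub>k|\<^sup>2 I)\<close> with \<open>q\<^sub>k = -a\<^sub>k c |d\<^sub>k|^(g-2) < 0\<close>. Inserting
  this into the \<open>p\<close>-Laplacian, the value of \<open>g\<close> makes everything collapse to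
  \<open>\<Delta>\<^sub>p V = \<kappa> |\<nabla>V|^(p-2) \<Sum>\<^sub>k q\<^sub>k (|d\<^sub>k|\<^sup>2 - (d\<^sub>k\<cdot>\<nabla>V)\<^sup>2/|\<nabla>V|\<^sup>2)\<close> with
  \<open>\<kappa> = (p - 2)(p + n - 2)/(p - 1)\<close>. By Cauchy-Schwarz every bracket is nonnegative, and
  in dimension one it vanishes, so \<open>\<Delta>\<^sub>p V\<close> has the sign of \<open>-\<kappa>\<close>.
\<close>

lemma partial_eq_derivative:
  fixes f :: "real^'n \<Rightarrow> real"
  assumes "(f has_derivative f') (at x)"
  shows "partial f i x = f' (axis i 1)"
proof -
  have "((\<lambda>t::real. x + t *\<^sub>R axis i 1) has_derivative (\<lambda>t. t *\<^sub>R axis i 1)) (at 0)"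
    by (auto intro!: derivative_eq_intros)
  from has_derivative_compose[OF this] assms
  have "((\<lambda>t. f (x + t *\<^sub>R axis i 1)) has_derivative (\<lambda>t. f' (t *\<^sub>R axis i 1))) (at 0)"
    by simp
  moreover have "(\<lambda>t. f' (t *\<^sub>R axis i 1)) = (\<lambda>t. f' (axis i 1) * t)"
    using has_derivative_linear[OF assms] by (auto simp: linear_scale)
  ultimately have "((\<lambda>t. f (x + t *\<^sub>R axis i 1)) has_real_derivative f' (axis i 1)) (at 0)"
    by (simp add: has_field_derivative_def)
  then show ?thesis
    unfolding partial_def by (rule DERIV_imp_deriv)
qed

lemma has_derivative_norm_diff:
  fixes w z :: "'a::real_inner"
  assumes "z \<noteq> w"
  shows "((\<lambda>x. norm (x - w)) has_derivative (\<lambda>h. ((z - w) \<bullet> h) / norm (z - w))) (at z)"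
proof -
  have "((\<lambda>x. norm (x - w)) has_derivative (\<lambda>h. h \<bullet> sgn (z - w))) (at z)"
    using has_derivative_compose[OF has_derivative_diff[OF has_derivative_ident has_derivative_const]
        has_derivative_norm[of "z - w"]] assms
    by simp
  moreover have "h \<bullet> sgn (z - w) = ((z - w) \<bullet> h) / norm (z - w)" for h
    by (simp add: sgn_div_norm inner_commute divide_inverse_commute del: scaleR_diff_right)
  ultimately show ?thesis
    by simp
qed

lemma norm_powr_eq_powr_minus_two_mult:
  fixes v :: "'a::real_inner"
  assumes "v \<noteq> 0"
  shows "norm v powr g = norm v powr (g - 2) * (v \<bullet> v)"
  using assms by (simp add: powr_diff power2_norm_eq_inner[symmetric])

lemma has_derivative_norm_diff_powr:
  fixes w z :: "'a::real_inner"
  assumes "z \<noteq> w"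
  shows "((\<lambda>x. norm (x - w) powr a) has_derivative
          (\<lambda>h. a * norm (z - w) powr (a - 2) * ((z - w) \<bullet> h))) (at z)"
proof -
  have pos: "norm (z - w) > 0"
    using assms by simp
  have "((\<lambda>x. norm (x - w) powr a) has_derivative
         (\<lambda>h. norm (z - w) powr a * (0 * ln (norm (z - w)) + ((z - w) \<bullet> h) / norm (z - w) * a / norm (z - w)))) (at z)"
    by (rule has_derivative_powr[OF has_derivative_norm_diff[OF assms] has_derivative_const pos]) simp
  moreover have "norm (z - w) powr a = norm (z - w) powr (a - 2) * (norm (z - w) * norm (z - w))"
    using norm_powr_eq_powr_minus_two_mult[of "z - w" a] assms
    by (simp add: power2_norm_eq_inner[symmetric] power2_eq_square)
  ultimately show ?thesis
    using pos by (simp add: field_simps)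
qed

text \<open>The power branch and the logarithmic branch (\<open>p = n\<close>) have the same gradient.\<close>

lemma has_derivative_fund_sol:
  fixes w z :: "real^'n"
  assumes "p \<noteq> 1" and "z \<noteq> w"
  shows "((\<lambda>x. fund_sol c p (x - w)) has_derivative
          (\<lambda>h. - c * norm (z - w) powr ((2 - real CARD('n) - p) / (p - 1)) * ((z - w) \<bullet> h))) (at z)"
proof (cases "p = real CARD('n)")
  case False
  let ?a = "(p - real CARD('n)) / (p - 1)"
  have "(\<lambda>x. fund_sol c p (x - w)) = (\<lambda>x. (- c * (p - 1) / (p - real CARD('n))) * norm (x - w) powr ?a)"
    using False by (simp add: fund_sol_def fun_eq_iff)
  moreover have "?a - 2 = (2 - real CARD('n) - p) / (p - 1)"
    using assms(1) by (simp add: field_simps)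
  moreover have "(- c * (p - 1) / (p - real CARD('n))) * ?a = - c"
    using assms(1) False by simp
  ultimately show ?thesis
    using has_derivative_mult_right[OF has_derivative_norm_diff_powr[OF assms(2), of ?a],
        of "- c * (p - 1) / (p - real CARD('n))"]
    by (simp only: mult.assoc[symmetric])
next
  case True
  have "(\<lambda>x. fund_sol c p (x - w)) = (\<lambda>x. - c * ln (norm (x - w)))"
    using True by (simp add: fund_sol_def fun_eq_iff)
  moreover have "(2 - real CARD('n) - p) / (p - 1) = -2"
    using assms(1) True by (simp add: field_simps)
  moreover have "((\<lambda>x. - c * ln (norm (x - w))) has_derivative
      (\<lambda>h. - c * (((z - w) \<bullet> h) / norm (z - w) * inverse (norm (z - w))))) (at z)"
    by (intro has_derivative_mult_right has_derivative_ln has_derivative_norm_diff) (use assms(2) in auto)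
  ultimately show ?thesis
    by (simp add: powr_minus power2_eq_square field_simps)
qed

lemma has_derivative_norm_diff_powr_mult_component:
  fixes w z :: "real^'n"
  assumes "z \<noteq> w"
  shows "((\<lambda>x. norm (x - w) powr g * (x - w) $ j) has_derivative
          (\<lambda>h. norm (z - w) powr g * h $ j + g * norm (z - w) powr (g - 2) * ((z - w) \<bullet> h) * (z - w) $ j)) (at z)"
proof -
  have "((\<lambda>x. (x - w) $ j) has_derivative (\<lambda>h. h $ j)) (at z)"
    using bounded_linear.has_derivative[OF bounded_linear_vec_nth
        has_derivative_diff[OF has_derivative_ident has_derivative_const]]
    by simp
  from has_derivative_mult[OF has_derivative_norm_diff_powr[OF assms] this]
  show ?thesis
    by (simp add: algebra_simps)
qed

definition outer_sum :: "('k \<Rightarrow> real) \<Rightarrow> ('k \<Rightarrow> real) \<Rightarrow> ('k \<Rightarrow> real^'n) \<Rightarrow> 'k set \<Rightarrow> real^'n^'n" where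
  "outer_sum \<alpha> \<beta> d K = (\<chi> i j. \<Sum>k\<in>K. \<alpha> k * (d k $ i * d k $ j) + (if i = j then \<beta> k else 0))"

lemma outer_sum_mult_vec:
  "outer_sum \<alpha> \<beta> d K *v v = (\<Sum>k\<in>K. (\<alpha> k * (d k \<bullet> v)) *\<^sub>R d k + \<beta> k *\<^sub>R v)"
proof -
  have "(outer_sum \<alpha> \<beta> d K *v v) $ i = (\<Sum>k\<in>K. \<alpha> k * (d k \<bullet> v) * d k $ i + \<beta> k * v $ i)" for i
  proof -
    have "(outer_sum \<alpha> \<beta> d K *v v) $ i
        = (\<Sum>j\<in>UNIV. \<Sum>k\<in>K. (\<alpha> k * (d k $ i * d k $ j) + (if i = j then \<beta> k else 0)) * v $ j)"
      by (simp add: outer_sum_def matrix_vector_mult_def sum_distrib_right)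
    also have "\<dots> = (\<Sum>k\<in>K. \<Sum>j\<in>UNIV. (\<alpha> k * (d k $ i * d k $ j) + (if i = j then \<beta> k else 0)) * v $ j)"
      by (rule sum.swap)
    also have "\<dots> = (\<Sum>k\<in>K. \<alpha> k * (d k \<bullet> v) * d k $ i + \<beta> k * v $ i)"
    proof (rule sum.cong[OF refl])
      fix k
      have "(\<Sum>j\<in>UNIV. (\<alpha> k * (d k $ i * d k $ j) + (if i = j then \<beta> k else 0)) * v $ j)
          = (\<Sum>j\<in>UNIV. \<alpha> k * d k $ i * (d k $ j * v $ j)) + (\<Sum>j\<in>UNIV. if i = j then \<beta> k * v $ j else 0)"
        unfolding sum.distrib[symmetric] by (rule sum.cong) (auto simp: algebra_simps)
      then show "(\<Sum>j\<in>UNIV. (\<alpha> k * (d k $ i * d k $ j) + (if i = j then \<beta> k else 0)) * v $ j)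
          = \<alpha> k * (d k \<bullet> v) * d k $ i + \<beta> k * v $ i"
        by (simp add: inner_vec_def sum_distrib_left algebra_simps)
    qed
    finally show ?thesis .
  qed
  then show ?thesis
    by (simp add: vec_eq_iff)
qed

lemma inner_outer_sum_mult_vec:
  "v \<bullet> (outer_sum \<alpha> \<beta> d K *v v) = (\<Sum>k\<in>K. \<alpha> k * (d k \<bullet> v)\<^sup>2 + \<beta> k * (v \<bullet> v))"
  by (simp add: outer_sum_mult_vec inner_sum_right inner_add_right inner_commute power2_eq_square mult.assoc)

lemma trace_outer_sum:
  fixes d :: "'k \<Rightarrow> real^'n"
  shows "(\<Sum>i\<in>UNIV. outer_sum \<alpha> \<beta> d K $ i $ i) = (\<Sum>k\<in>K. \<alpha> k * (d k \<bullet> d k) + \<beta> k * real CARD('n))"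
  unfolding outer_sum_def
  by (simp add: sum.swap[of _ UNIV K] sum.distrib inner_vec_def sum_distrib_left sum_distrib_right mult.commute)

lemma partial_weighted_fund_sol_sum:
  fixes y :: "'k \<Rightarrow> real^'n"
  assumes "p \<noteq> 1" and "z \<notin> y ` I"
  shows "partial (\<lambda>x. \<Sum>k\<in>I. a k * fund_sol c p (x - y k)) j z
       = (\<Sum>k\<in>I. - a k * c * (norm (z - y k) powr ((2 - real CARD('n) - p) / (p - 1)) * (z - y k) $ j))"
proof -
  have "((\<lambda>x. \<Sum>k\<in>I. a k * fund_sol c p (x - y k)) has_derivative
      (\<lambda>h. \<Sum>k\<in>I. a k * (- c * norm (z - y k) powr ((2 - real CARD('n) - p) / (p - 1)) * ((z - y k) \<bullet> h)))) (at z)"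
    by (intro has_derivative_sum has_derivative_mult_right has_derivative_fund_sol assms(1))
      (use assms(2) in auto)
  then show ?thesis
    by (simp add: partial_eq_derivative inner_axis mult.assoc)
qed

lemma hess_weighted_fund_sol_sum:
  fixes p :: real and y :: "'k \<Rightarrow> real^'n"
  defines "g \<equiv> (2 - real CARD('n) - p) / (p - 1)"
  assumes "p \<noteq> 1" and "finite I" and "x \<notin> y ` I"
  shows "hess (\<lambda>x. \<Sum>k\<in>I. a k * fund_sol c p (x - y k)) x
       = outer_sum (\<lambda>k. g * (- a k * c * norm (x - y k) powr (g - 2)))
           (\<lambda>k. - a k * c * norm (x - y k) powr (g - 2) * ((x - y k) \<bullet> (x - y k))) (\<lambda>k. x - y k) I"
proof -
  let ?V = "\<lambda>x. \<Sum>k\<in>I. a k * fund_sol c p (x - y k)"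
  define F where "F j z = (\<Sum>k\<in>I. - a k * c * (norm (z - y k) powr g * (z - y k) $ j))" for j z
  have "open (- y ` I)"
    using assms(3) by (simp add: open_Compl finite_imp_closed)
  have partial_eq: "partial ?V j z = F j z" if "z \<in> - y ` I" for j z
    using partial_weighted_fund_sol_sum[OF assms(2)] that unfolding F_def g_def by simp
  have "(F j has_derivative (\<lambda>h. \<Sum>k\<in>I. - a k * c * (norm (x - y k) powr g * h $ j
      + g * norm (x - y k) powr (g - 2) * ((x - y k) \<bullet> h) * (x - y k) $ j))) (at x)" for j
    unfolding F_def
    by (intro has_derivative_sum has_derivative_mult_right has_derivative_norm_diff_powr_mult_component)
      (use assms(4) in auto)
  then have dpartial: "((\<lambda>z. partial ?V j z) has_derivative (\<lambda>h. \<Sum>k\<in>I. - a k * c * (norm (x - y k) powr g * h $ j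
      + g * norm (x - y k) powr (g - 2) * ((x - y k) \<bullet> h) * (x - y k) $ j))) (at x)" for j
    by (rule has_derivative_transform_within_open[OF _ \<open>open (- y ` I)\<close>])
      (use assms(4) partial_eq in auto)
  have "hess ?V x $ i $ j = (\<Sum>k\<in>I. - a k * c * (norm (x - y k) powr g * (if i = j then 1 else 0)
      + g * norm (x - y k) powr (g - 2) * ((x - y k) $ i * (x - y k) $ j)))" for i j
    unfolding hess_def using partial_eq_derivative[OF dpartial]
    by (simp add: inner_axis mult.assoc del: vector_minus_component) (simp add: axis_def)
  moreover have "norm (x - y k) powr g = norm (x - y k) powr (g - 2) * ((x - y k) \<bullet> (x - y k))" if "k \<in> I" for k
    using assms(4) that by (intro norm_powr_eq_powr_minus_two_mult) auto
  ultimately show ?thesis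
    unfolding outer_sum_def vec_eq_iff
    by (auto intro!: sum.cong simp: algebra_simps simp del: vector_minus_component)
qed

lemma inner_square_div_le:
  fixes u v :: "'a::real_inner"
  assumes "v \<noteq> 0"
  shows "(u \<bullet> v)\<^sup>2 / (v \<bullet> v) \<le> u \<bullet> u"
  using Cauchy_Schwarz_ineq[of u v] assms by (simp add: divide_le_eq)

lemma inner_square_div_eq_card_1:
  fixes u v :: "real^'n"
  assumes "CARD('n) = 1" and "v \<noteq> 0"
  shows "(u \<bullet> v)\<^sup>2 / (v \<bullet> v) = u \<bullet> u"
proof -
  obtain i where i: "(UNIV :: 'n set) = {i}"
    using assms(1) card_1_singletonE by blast
  then have "v $ i \<noteq> 0"
    using assms(2) by (metis UNIV_I singletonD vec_eq_iff zero_index)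
  then show ?thesis
    by (simp add: inner_vec_def i power2_eq_square)
qed

lemma p_laplacian_eq_of_hess_outer_sum:
  fixes p :: real and u :: "real^'n \<Rightarrow> real" and d :: "'k \<Rightarrow> real^'n"
  defines "g \<equiv> (2 - real CARD('n) - p) / (p - 1)"
  assumes "p \<noteq> 1" and "grad u x \<noteq> 0"
    and "hess u x = outer_sum (\<lambda>k. g * q k) (\<lambda>k. q k * (d k \<bullet> d k)) d K"
  shows "p_laplacian p u x = (p - 2) * (p + real CARD('n) - 2) / (p - 1) * norm (grad u x) powr (p - 2)
           * (\<Sum>k\<in>K. q k * (d k \<bullet> d k - (d k \<bullet> grad u x)\<^sup>2 / (grad u x \<bullet> grad u x)))"
proof -
  define G where "G = grad u x"
  define \<kappa> where "\<kappa> = (p - 2) * (p + real CARD('n) - 2) / (p - 1)"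
  have "G \<bullet> G \<noteq> 0"
    using assms(3) unfolding G_def by simp
  have term_eq: "(p - 2) * (g * Q * X + Q * D * S) / S + (g * Q * D + Q * D * real CARD('n))
      = \<kappa> * (Q * (D - X / S))" if "S \<noteq> 0" for Q X D S :: real
  proof -
    have exponent: "(p - 2) * g = - \<kappa>" "p - 2 + g + real CARD('n) = \<kappa>"
      using assms(2) unfolding g_def \<kappa>_def by (simp_all add: field_simps)
    have "(p - 2) * (g * Q * X + Q * D * S) / S + (g * Q * D + Q * D * real CARD('n))
        = Q * ((p - 2) * g * (X / S) + (p - 2 + g + real CARD('n)) * D)"
      using that by (simp add: field_simps)
    also have "\<dots> = \<kappa> * (Q * (D - X / S))"
      unfolding exponent by (simp add: algebra_simps)
    finally show ?thesis .
  qed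
  have "(p - 2) * (\<Sum>k\<in>K. g * q k * (d k \<bullet> G)\<^sup>2 + q k * (d k \<bullet> d k) * (G \<bullet> G)) / (G \<bullet> G)
      + (\<Sum>k\<in>K. g * q k * (d k \<bullet> d k) + q k * (d k \<bullet> d k) * real CARD('n))
    = (\<Sum>k\<in>K. (p - 2) * (g * q k * (d k \<bullet> G)\<^sup>2 + q k * (d k \<bullet> d k) * (G \<bullet> G)) / (G \<bullet> G)
      + (g * q k * (d k \<bullet> d k) + q k * (d k \<bullet> d k) * real CARD('n)))"
    by (simp add: sum.distrib sum_distrib_left sum_divide_distrib distrib_left add_divide_distrib)
  also have "\<dots> = (\<Sum>k\<in>K. \<kappa> * (q k * (d k \<bullet> d k - (d k \<bullet> G)\<^sup>2 / (G \<bullet> G))))"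
    using term_eq[OF \<open>G \<bullet> G \<noteq> 0\<close>] by simp
  finally show ?thesis
    unfolding p_laplacian_def laplacian_def assms(4) inner_outer_sum_mult_vec trace_outer_sum
      power2_norm_eq_inner G_def[symmetric] \<kappa>_def[symmetric]
    by (simp add: sum_distrib_left ac_simps)
qed

lemma p_laplacian_weighted_fund_sol_sum:
  fixes p c :: real and y :: "'k \<Rightarrow> real^'n" and V :: "real^'n \<Rightarrow> real"
  assumes "p \<noteq> 1" and "c > 0" and "finite I" and "\<And>k. k \<in> I \<Longrightarrow> a k > 0"
    and "x \<notin> y ` I" and "grad V x \<noteq> 0"
    and "V = (\<lambda>x. \<Sum>k\<in>I. a k * fund_sol c p (x - y k))"
  obtains T where "p_laplacian p V x = (p - 2) * (p + real CARD('n) - 2) / (p - 1) * norm (grad V x) powr (p - 2) * T"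
    and "T \<le> 0" and "CARD('n) = 1 \<Longrightarrow> T = 0"
proof -
  define g where "g = (2 - real CARD('n) - p) / (p - 1)"
  define q where "q k = - a k * c * norm (x - y k) powr (g - 2)" for k
  define T where "T = (\<Sum>k\<in>I. q k * ((x - y k) \<bullet> (x - y k) - ((x - y k) \<bullet> grad V x)\<^sup>2 / (grad V x \<bullet> grad V x)))"
  have "hess V x = outer_sum (\<lambda>k. g * q k) (\<lambda>k. q k * ((x - y k) \<bullet> (x - y k))) (\<lambda>k. x - y k) I"
    unfolding assms(7) q_def g_def
    by (rule hess_weighted_fund_sol_sum[OF assms(1) assms(3) assms(5)])
  then have "p_laplacian p V x = (p - 2) * (p + real CARD('n) - 2) / (p - 1) * norm (grad V x) powr (p - 2) * T"
    unfolding T_def g_def by (rule p_laplacian_eq_of_hess_outer_sum[OF assms(1) assms(6)])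
  moreover have "T \<le> 0"
    unfolding T_def
  proof (rule sum_nonpos)
    fix k
    assume "k \<in> I"
    then have "q k \<le> 0"
      unfolding q_def using assms(2,4) by (simp add: less_imp_le)
    moreover have "((x - y k) \<bullet> grad V x)\<^sup>2 / (grad V x \<bullet> grad V x) \<le> (x - y k) \<bullet> (x - y k)"
      using assms(6) by (rule inner_square_div_le)
    ultimately show "q k * ((x - y k) \<bullet> (x - y k) - ((x - y k) \<bullet> grad V x)\<^sup>2 / (grad V x \<bullet> grad V x)) \<le> 0"
      by (simp add: mult_nonpos_nonneg)
  qed
  moreover have "T = 0" if "CARD('n) = 1"
    unfolding T_def using assms(6) inner_square_div_eq_card_1[OF that] by simp
  ultimately show ?thesis
    using that by blast
qed

theorem lemma3p1:
  fixes p c :: real and N :: nat and a :: "nat \<Rightarrow> real" and y :: "nat \<Rightarrow> real^'n"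
    and V :: "real^'n \<Rightarrow> real"
  assumes "p \<noteq> 1" and "c > 0" and "N \<ge> 1"
    and "\<And>i. i \<in> {1..N} \<Longrightarrow> a i > 0"
    and "V = (\<lambda>x. \<Sum>i=1..N. a i * fund_sol c p (x - y i))"
  shows "\<forall>x. x \<notin> y ` {1..N} \<and> grad V x \<noteq> 0 \<longrightarrow>
     ((CARD('n) = 1 \<or> p = 2 \<or> p + real CARD('n) = 2) \<longrightarrow> p_laplacian p V x = 0) \<and>
     (\<not> (CARD('n) = 1 \<or> p = 2 \<or> p + real CARD('n) = 2) \<and>
        (p - 2) * (p + real CARD('n) - 2) / (p - 1) > 0 \<longrightarrow> p_laplacian p V x \<le> 0) \<and>
     (\<not> (CARD('n) = 1 \<or> p = 2 \<or> p + real CARD('n) = 2) \<and>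
        (p - 2) * (p + real CARD('n) - 2) / (p - 1) < 0 \<longrightarrow> p_laplacian p V x \<ge> 0)"
proof (intro allI impI, goal_cases)
  case (1 x)
  define \<kappa> where "\<kappa> = (p - 2) * (p + real CARD('n) - 2) / (p - 1)"
  obtain T where "p_laplacian p V x = \<kappa> * norm (grad V x) powr (p - 2) * T"
    and "T \<le> 0" and "CARD('n) = 1 \<Longrightarrow> T = 0"
    using p_laplacian_weighted_fund_sol_sum[OF assms(1,2) finite_atLeastAtMost assms(4) _ _ assms(5)] 1
    unfolding \<kappa>_def by blast
  moreover have "\<kappa> = 0" if "p = 2 \<or> p + real CARD('n) = 2"
    using that unfolding \<kappa>_def by auto
  ultimately show ?case
    unfolding \<kappa>_def[symmetric] by (auto simp: mult_le_0_iff zero_le_mult_iff)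
qed

end
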